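(* Let $G$ be a graph whose twin graph $G^*$ is isomorphic to $K_1+P_4$, where the degree-4 vertex is of any type and the other four vertices are of type (1K); furthermore, no two non-adjacent vertices of $G^*$ are both of type (K), and no two adjacent vertices of $G^*$ are such that one is of type (K) and the other of type (N). Then $D(G)\neq n(G)-2$.
   Context: All graphs are finite and simple; $n(G)=|V(G)|$; $N_G(u)$ is the neighborhood of $u$; $P_4$ is the path on four vertices and the join $G+H$ is obtained from the disjoint union of $G$ and $H$ by adding all edges between $V(G)$ and $V(H)$. A distinguishing coloring of a graph $G$ is a (not necessarily proper) vertex coloring such that the only automorphism of $G$ mapping every vertex to a vertex of the same color is the identity; the distinguishing number $D(G)$ is the minimum number of colors in a distinguishing coloring of $G$. Two distinct vertices $u,v$ are twins if $N_G(u)\setminus\{v\}=N_G(v)\setminus\{u\}$. The relation $u\equiv v$ iff $u=v$ or $u,v$ are twins is an equivalence relation; the class of $v$ is denoted $v^*$. The twin graph $G^*$ has the equivalence classes as vertices, distinct classes $u^*,v^*$ being adjacent iff $uv\in E(G)$. Each class induces a complete or an edgeless graph. A class $v^*$ is of type (1) if $|v^*|=1$, of type (K) if $|v^*|\ge 2$ and it induces a complete graph, and of type (N) if $|v^*|\ge2$ and it induces an edgeless graph; type (1K) means type (1) or (K), type (1N) means (1) or (N), and type (KN) means (K) or (N). *)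

theory Defs
  imports Main
begin

definition simple_graph :: "'a set \<Rightarrow> ('a \<Rightarrow> 'a \<Rightarrow> bool) \<Rightarrow> bool" where
  "simple_graph V E \<longleftrightarrow> finite V \<and> (\<forall>u v. E u v \<longrightarrow> u \<in> V \<and> v \<in> V)
     \<and> (\<forall>u v. E u v \<longrightarrow> E v u) \<and> (\<forall>u. \<not> E u u)"

definition nbhd :: "'a set \<Rightarrow> ('a \<Rightarrow> 'a \<Rightarrow> bool) \<Rightarrow> 'a \<Rightarrow> 'a set" where
  "nbhd V E u = {w \<in> V. E u w}"

definition graph_iso :: "'a set \<Rightarrow> ('a \<Rightarrow> 'a \<Rightarrow> bool) \<Rightarrow> 'b set \<Rightarrow> ('b \<Rightarrow> 'b \<Rightarrow> bool) \<Rightarrow> ('a \<Rightarrow> 'b) \<Rightarrow> bool" where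
  "graph_iso V E W F f \<longleftrightarrow> bij_betw f V W \<and> (\<forall>u\<in>V. \<forall>v\<in>V. E u v \<longleftrightarrow> F (f u) (f v))"

definition automorphism :: "'a set \<Rightarrow> ('a \<Rightarrow> 'a \<Rightarrow> bool) \<Rightarrow> ('a \<Rightarrow> 'a) \<Rightarrow> bool" where
  "automorphism V E f \<longleftrightarrow> graph_iso V E V E f"

definition distinguishing :: "'a set \<Rightarrow> ('a \<Rightarrow> 'a \<Rightarrow> bool) \<Rightarrow> ('a \<Rightarrow> 'c) \<Rightarrow> bool" where
  "distinguishing V E c \<longleftrightarrow>
     (\<forall>f. automorphism V E f \<and> (\<forall>v\<in>V. c (f v) = c v) \<longrightarrow> (\<forall>v\<in>V. f v = v))"

definition distinguishing_number :: "'a set \<Rightarrow> ('a \<Rightarrow> 'a \<Rightarrow> bool) \<Rightarrow> nat" where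
  "distinguishing_number V E =
     (LEAST k. \<exists>c :: 'a \<Rightarrow> nat. c ` V \<subseteq> {..<k} \<and> distinguishing V E c)"

definition twins :: "'a set \<Rightarrow> ('a \<Rightarrow> 'a \<Rightarrow> bool) \<Rightarrow> 'a \<Rightarrow> 'a \<Rightarrow> bool" where
  "twins V E u v \<longleftrightarrow> u \<in> V \<and> v \<in> V \<and> u \<noteq> v \<and> nbhd V E u - {v} = nbhd V E v - {u}"

definition twin_class :: "'a set \<Rightarrow> ('a \<Rightarrow> 'a \<Rightarrow> bool) \<Rightarrow> 'a \<Rightarrow> 'a set" where
  "twin_class V E v = {u \<in> V. u = v \<or> twins V E u v}"

text \<open>The twin graph G*: vertices are the twin classes, distinct classes adjacent iff some
  (equivalently every) pair of representatives is adjacent.\<close>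
definition twin_vertices :: "'a set \<Rightarrow> ('a \<Rightarrow> 'a \<Rightarrow> bool) \<Rightarrow> 'a set set" where
  "twin_vertices V E = twin_class V E ` V"

definition twin_adj :: "('a \<Rightarrow> 'a \<Rightarrow> bool) \<Rightarrow> 'a set \<Rightarrow> 'a set \<Rightarrow> bool" where
  "twin_adj E X Y \<longleftrightarrow> X \<noteq> Y \<and> (\<exists>u\<in>X. \<exists>v\<in>Y. E u v)"

definition type_1 :: "'a set \<Rightarrow> bool" where
  "type_1 X \<longleftrightarrow> card X = 1"

definition type_K :: "('a \<Rightarrow> 'a \<Rightarrow> bool) \<Rightarrow> 'a set \<Rightarrow> bool" where
  "type_K E X \<longleftrightarrow> card X \<ge> 2 \<and> (\<forall>u\<in>X. \<forall>v\<in>X. u \<noteq> v \<longrightarrow> E u v)"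

definition type_N :: "('a \<Rightarrow> 'a \<Rightarrow> bool) \<Rightarrow> 'a set \<Rightarrow> bool" where
  "type_N E X \<longleftrightarrow> card X \<ge> 2 \<and> (\<forall>u\<in>X. \<forall>v\<in>X. \<not> E u v)"

text \<open>K_1 + P_4 on vertices {0..4}: vertex 0 is the degree-4 vertex, 1-2-3-4 is the path.\<close>
definition k1p4_edge :: "nat \<Rightarrow> nat \<Rightarrow> bool" where
  "k1p4_edge i j \<longleftrightarrow>
     (i = 0 \<and> j \<in> {1..4}) \<or> (j = 0 \<and> i \<in> {1..4}) \<or>
     (i \<in> {1..4} \<and> j \<in> {1..4} \<and> (i = j + 1 \<or> j = i + 1))"

end

theory Submission
  imports Defs
begin

text \<open>Choose one vertex in each twin class. These five vertices induce a copy of \<open>K\<^sub>1 + P\<^sub>4\<close>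
  in \<open>G\<close>. Colour one end of the path with colour 0, the other four representatives with colour 1,
  and give each of the remaining \<open>n(G) - 5\<close> vertices its own colour. A colour-preserving
  automorphism fixes every vertex with a private colour, hence maps the copy of \<open>K\<^sub>1 + P\<^sub>4\<close>
  onto itself fixing an end of the path, and so is the identity. Thus \<open>D(G) \<le> n(G) - 3\<close>.\<close>

lemma twins_iff:
  assumes "simple_graph V E"
  shows "twins V E u v \<longleftrightarrow>
    u \<in> V \<and> v \<in> V \<and> u \<noteq> v \<and> (\<forall>w \<in> V - {u, v}. E u w \<longleftrightarrow> E v w)"
proof -
  have "nbhd V E u - {v} = nbhd V E v - {u} \<longleftrightarrow> (\<forall>w \<in> V - {u, v}. E u w \<longleftrightarrow> E v w)"
    if "u \<in> V" "v \<in> V" "u \<noteq> v"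
    using assms that unfolding nbhd_def simple_graph_def by blast
  then show ?thesis
    unfolding twins_def by blast
qed

lemma twins_sym: "twins V E u v \<Longrightarrow> twins V E v u"
  unfolding twins_def by auto

lemma twins_trans:
  assumes G: "simple_graph V E" and "twins V E a b" "twins V E b c" "a \<noteq> c"
  shows "twins V E a c"
proof -
  have sym: "E x y \<longleftrightarrow> E y x" for x y
    using G unfolding simple_graph_def by blast
  have ab: "\<forall>w \<in> V - {a, b}. E a w \<longleftrightarrow> E b w" and bc: "\<forall>w \<in> V - {b, c}. E b w \<longleftrightarrow> E c w"
    and V: "a \<in> V" "b \<in> V" "c \<in> V" and "a \<noteq> b" "b \<noteq> c"
    using assms twins_iff[OF G] by auto
  \<comment> \<open>\<open>b\<close> itself is the one vertex not handled by chaining the two twin relations.\<close>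
  have "E a b \<longleftrightarrow> E c b"
    using ab bc V \<open>a \<noteq> b\<close> \<open>b \<noteq> c\<close> \<open>a \<noteq> c\<close> sym by blast
  with ab bc V \<open>a \<noteq> c\<close> show ?thesis
    unfolding twins_iff[OF G] by blast
qed

lemma twin_class_eq:
  assumes G: "simple_graph V E" and "y \<in> twin_class V E x"
  shows "twin_class V E y = twin_class V E x"
proof (cases "y = x")
  case False
  then have yx: "twins V E y x"
    using assms(2) unfolding twin_class_def by auto
  have "u \<in> twin_class V E y \<longleftrightarrow> u \<in> twin_class V E x" for u
    using twins_trans[OF G _ yx] twins_trans[OF G _ twins_sym[OF yx]] twins_sym[OF yx] yx
    unfolding twin_class_def by auto
  then show ?thesis by blast
qed simp

lemma twin_adj_twin_class_iff:
  assumes G: "simple_graph V E" and x: "x \<in> V" and y: "y \<in> V"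
    and ne: "twin_class V E x \<noteq> twin_class V E y"
  shows "twin_adj E (twin_class V E x) (twin_class V E y) \<longleftrightarrow> E x y"
proof
  assume "E x y"
  moreover have "x \<in> twin_class V E x" "y \<in> twin_class V E y"
    using x y unfolding twin_class_def by auto
  ultimately show "twin_adj E (twin_class V E x) (twin_class V E y)"
    using ne unfolding twin_adj_def by blast
next
  assume "twin_adj E (twin_class V E x) (twin_class V E y)"
  then obtain u v where u: "u \<in> twin_class V E x" and v: "v \<in> twin_class V E y" and "E u v"
    unfolding twin_adj_def by blast
  have sym: "E a b \<longleftrightarrow> E b a" and irrefl: "\<not> E a a" for a b
    using G unfolding simple_graph_def by blast+
  have "x \<notin> twin_class V E y" "v \<notin> twin_class V E x"
    using twin_class_eq[OF G] u v ne by metis+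
  then have "x \<noteq> v" "x \<noteq> y" "v \<in> V"
    using x v unfolding twin_class_def by auto
  have "E x v"
  proof (cases "u = x")
    case False
    then have "twins V E u x" using u unfolding twin_class_def by auto
    moreover have "u \<noteq> v" using \<open>E u v\<close> irrefl by blast
    ultimately show ?thesis
      using \<open>E u v\<close> \<open>v \<in> V\<close> \<open>x \<noteq> v\<close> unfolding twins_iff[OF G] by blast
  qed (use \<open>E u v\<close> in simp)
  show "E x y"
  proof (cases "v = y")
    case False
    then have "twins V E v y" using v unfolding twin_class_def by auto
    then show ?thesis
      using \<open>E x v\<close> x \<open>x \<noteq> v\<close> \<open>x \<noteq> y\<close> sym unfolding twins_iff[OF G] by blast
  qed (use \<open>E x v\<close> in simp)
qed

lemma twin_graph_induced_copy:
  assumes G: "simple_graph V E"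
    and iso: "graph_iso I F (twin_vertices V E) (twin_adj E) \<phi>"
  obtains r where "inj_on r I" "r ` I \<subseteq> V"
    "\<And>i j. i \<in> I \<Longrightarrow> j \<in> I \<Longrightarrow> E (r i) (r j) \<longleftrightarrow> F i j"
proof -
  have bij: "bij_betw \<phi> I (twin_class V E ` V)"
    and F: "\<And>i j. i \<in> I \<Longrightarrow> j \<in> I \<Longrightarrow> F i j \<longleftrightarrow> twin_adj E (\<phi> i) (\<phi> j)"
    using iso unfolding graph_iso_def twin_vertices_def by auto
  then have "\<forall>i\<in>I. \<exists>x\<in>V. \<phi> i = twin_class V E x"
    using bij_betw_apply by fastforce
  then obtain r where r: "\<And>i. i \<in> I \<Longrightarrow> r i \<in> V \<and> \<phi> i = twin_class V E (r i)"
    by metis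
  have inj_\<phi>: "inj_on \<phi> I"
    using bij bij_betw_def by blast
  show thesis
  proof
    show "inj_on r I"
      using inj_\<phi> r unfolding inj_on_def by metis
    show "r ` I \<subseteq> V"
      using r by blast
  next
    fix i j assume ij: "i \<in> I" "j \<in> I"
    show "E (r i) (r j) \<longleftrightarrow> F i j"
    proof (cases "i = j")
      case True
      then show ?thesis
        using G F ij unfolding simple_graph_def twin_adj_def by blast
    next
      case False
      then have "\<phi> i \<noteq> \<phi> j" using inj_\<phi> ij unfolding inj_on_def by blast
      then show ?thesis
        using F[OF ij] r[OF ij(1)] r[OF ij(2)] twin_adj_twin_class_iff[OF G] by metis
    qed
  qed
qed

lemma k1p4_edge_1_iff: "k1p4_edge 1 x \<longleftrightarrow> x = 0 \<or> x = 2"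
  by (auto simp: k1p4_edge_def)

lemma k1p4_automorphism_fixing_end:
  assumes maps: "\<sigma> ` {0..4} \<subseteq> {0..4}" and inj: "inj_on \<sigma> {0..4}" and fix1: "\<sigma> 1 = 1"
    and edges: "\<And>i j. i \<in> {0..4} \<Longrightarrow> j \<in> {0..4} \<Longrightarrow> k1p4_edge (\<sigma> i) (\<sigma> j) \<longleftrightarrow> k1p4_edge i j"
    and i: "i \<in> {0..(4::nat)}"
  shows "\<sigma> i = i"
proof -
  have adj1: "k1p4_edge 1 (\<sigma> k) \<longleftrightarrow> k = 0 \<or> k = 2" if "k \<in> {0..4}" for k
    using edges[OF _ that, of 1] fix1 k1p4_edge_1_iff[of k] by simp
  have near: "\<sigma> k \<in> {0, 2}" if "k \<in> {0, 2}" for k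
    using adj1[of k] that unfolding k1p4_edge_1_iff by auto
  have far: "\<sigma> k \<in> {3, 4}" if "k \<in> {3, 4}" for k
  proof -
    have k: "k \<in> {0..4}" "k \<noteq> 1"
      using that by auto
    have "\<sigma> k \<in> {0..4}"
      using maps k by blast
    moreover have "\<sigma> k \<noteq> 1"
      using inj_onD[OF inj, of k 1] fix1 k by auto
    moreover have "\<sigma> k \<noteq> 0" "\<sigma> k \<noteq> 2"
      using adj1[OF k(1)] that unfolding k1p4_edge_1_iff by auto
    ultimately show ?thesis
      by auto
  qed
  have e24: "\<not> k1p4_edge (\<sigma> 2) (\<sigma> 4)" and e23: "k1p4_edge (\<sigma> 2) (\<sigma> 3)"
    and e04: "k1p4_edge (\<sigma> 0) (\<sigma> 4)"
    using edges[of 2 4] edges[of 2 3] edges[of 0 4] by (simp_all add: k1p4_edge_def)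
  have path: "k1p4_edge 0 3" "k1p4_edge 2 3" "k1p4_edge 0 4" "\<not> k1p4_edge 2 4"
    by (simp_all add: k1p4_edge_def)
  have "\<sigma> 4 = 4"
    using far[of 4] near[of 2] e24 path by auto
  moreover have "\<sigma> 2 = 2"
    using \<open>\<sigma> 4 = 4\<close> near[of 2] e24 path by auto
  moreover have "\<sigma> 3 = 3"
    using \<open>\<sigma> 2 = 2\<close> far[of 3] e23 path by auto
  moreover have "\<sigma> 0 = 0"
    using \<open>\<sigma> 4 = 4\<close> near[of 0] e04 path by auto
  ultimately show ?thesis
    using fix1 i by (auto simp: atLeastAtMost_iff le_Suc_eq numeral_eq_Suc)
qed

lemma induced_k1p4_automorphism_fixing_end:
  assumes f: "automorphism V E f" and inj: "inj_on r {0..4}" and rV: "r ` {0..4} \<subseteq> V"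
    and copy: "\<And>i j. i \<in> {0..4} \<Longrightarrow> j \<in> {0..4} \<Longrightarrow> E (r i) (r j) \<longleftrightarrow> k1p4_edge i j"
    and maps: "f ` r ` {0..4} \<subseteq> r ` {0..4}" and fix1: "f (r 1) = r 1"
    and i: "i \<in> {0..4}"
  shows "f (r i) = r i"
proof -
  have f_inj: "inj_on f V" and f_edges: "\<And>u v. u \<in> V \<Longrightarrow> v \<in> V \<Longrightarrow> E (f u) (f v) \<longleftrightarrow> E u v"
    using f unfolding automorphism_def graph_iso_def bij_betw_def by auto
  define \<sigma> where "\<sigma> k = inv_into {0..4} r (f (r k))" for k
  have \<sigma>_in: "\<sigma> k \<in> {0..4}" and r_\<sigma>: "r (\<sigma> k) = f (r k)" if "k \<in> {0..4}" for k
  proof -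
    have "f (r k) \<in> r ` {0..4}"
      using maps that by blast
    then show "\<sigma> k \<in> {0..4}" "r (\<sigma> k) = f (r k)"
      unfolding \<sigma>_def by (rule inv_into_into, rule f_inv_into_f)
  qed
  have r_in: "r k \<in> V" if "k \<in> {0..4}" for k
    using rV that by blast
  have "\<sigma> i = i"
  proof (rule k1p4_automorphism_fixing_end[OF _ _ _ _ i])
    show "\<sigma> ` {0..4} \<subseteq> {0..4}"
      using \<sigma>_in by blast
    show "inj_on \<sigma> {0..4}"
    proof (rule inj_onI)
      fix j k assume jk: "j \<in> {0..4}" "k \<in> {0..4}" "\<sigma> j = \<sigma> k"
      then have "f (r j) = f (r k)"
        using r_\<sigma> by metis
      then show "j = k"
        using inj_onD[OF f_inj] inj_onD[OF inj] r_in jk by blast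
    qed
    show "\<sigma> 1 = 1"
      using fix1 inv_into_f_f[OF inj] unfolding \<sigma>_def by simp
    show "k1p4_edge (\<sigma> j) (\<sigma> k) \<longleftrightarrow> k1p4_edge j k" if jk: "j \<in> {0..4}" "k \<in> {0..4}" for j k
    proof -
      have "k1p4_edge (\<sigma> j) (\<sigma> k) \<longleftrightarrow> E (f (r j)) (f (r k))"
        using copy[OF \<sigma>_in \<sigma>_in] r_\<sigma> jk by simp
      also have "\<dots> \<longleftrightarrow> k1p4_edge j k"
        using f_edges[OF r_in r_in] copy jk by simp
      finally show ?thesis .
    qed
  qed
  then show ?thesis
    using r_\<sigma>[OF i] by simp
qed

lemma distinguishing_number_le_rigid_subset:
  fixes \<kappa> :: "'a \<Rightarrow> nat"
  assumes fin: "finite V" and SV: "S \<subseteq> V" and \<kappa>: "\<kappa> ` S \<subseteq> {..<m}"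
    and rigid: "\<And>f. automorphism V E f \<Longrightarrow> \<forall>s\<in>S. f s \<in> S \<and> \<kappa> (f s) = \<kappa> s \<Longrightarrow> \<forall>s\<in>S. f s = s"
  shows "distinguishing_number V E \<le> card V - card S + m"
proof -
  obtain h where h: "bij_betw h (V - S) {..<card (V - S)}"
    using fin ex_bij_betw_finite_nat[of "V - S"] atLeast0LessThan by auto
  define c where "c v = (if v \<in> S then \<kappa> v else m + h v)" for v
  have "c ` V \<subseteq> {..<card V - card S + m}"
    using h \<kappa> bij_betw_apply[OF h] card_Diff_subset[OF finite_subset[OF SV fin] SV]
    unfolding c_def by fastforce
  moreover have "distinguishing V E c"
    unfolding distinguishing_def
  proof (intro allI impI)
    fix f assume "automorphism V E f \<and> (\<forall>v\<in>V. c (f v) = c v)"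
    then have f: "automorphism V E f" and c_f: "\<And>v. v \<in> V \<Longrightarrow> c (f v) = c v"
      by auto
    have fV: "f v \<in> V" if "v \<in> V" for v
      using f that bij_betw_apply unfolding automorphism_def graph_iso_def by fast
    have "f v = v" if "v \<in> V - S" for v
    proof -
      have "f v \<notin> S" and "h (f v) = h v"
        using c_f[of v] that \<kappa> unfolding c_def by (auto split: if_splits)
      then show ?thesis
        using h fV[of v] that unfolding bij_betw_def inj_on_def by blast
    qed
    moreover have "\<forall>s\<in>S. f s \<in> S \<and> \<kappa> (f s) = \<kappa> s"
      using c_f SV \<kappa> unfolding c_def by (fastforce split: if_splits)
    ultimately show "\<forall>v\<in>V. f v = v"
      using rigid[OF f] by blast
  qed
  ultimately show ?thesis
    unfolding distinguishing_number_def by (blast intro: Least_le)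
qed

theorem lemma4p9:
  fixes V :: "'a set" and E :: "'a \<Rightarrow> 'a \<Rightarrow> bool" and \<phi> :: "nat \<Rightarrow> 'a set"
  assumes "simple_graph V E"
    and "graph_iso {0..4} k1p4_edge (twin_vertices V E) (twin_adj E) \<phi>"
    and "\<forall>i\<in>{1..4}. type_1 (\<phi> i) \<or> type_K E (\<phi> i)"
    and "\<forall>X\<in>twin_vertices V E. \<forall>Y\<in>twin_vertices V E.
           X \<noteq> Y \<and> \<not> twin_adj E X Y \<longrightarrow> \<not> (type_K E X \<and> type_K E Y)"
    and "\<forall>X\<in>twin_vertices V E. \<forall>Y\<in>twin_vertices V E.
           twin_adj E X Y \<longrightarrow> \<not> (type_K E X \<and> type_N E Y)"
  shows "distinguishing_number V E \<noteq> card V - 2"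
proof -
  obtain r where inj: "inj_on r {0..4::nat}" and rV: "r ` {0..4} \<subseteq> V"
    and copy: "\<And>i j. i \<in> {0..4} \<Longrightarrow> j \<in> {0..4} \<Longrightarrow> E (r i) (r j) \<longleftrightarrow> k1p4_edge i j"
    using twin_graph_induced_copy[OF assms(1,2)] by blast
  define \<kappa> where "\<kappa> v = (if v = r 1 then 0 else 1 :: nat)" for v
  have fin: "finite V"
    using assms(1) unfolding simple_graph_def by blast
  have "distinguishing_number V E \<le> card V - card (r ` {0..4}) + 2"
  proof (rule distinguishing_number_le_rigid_subset[OF fin rV])
    show "\<kappa> ` r ` {0..4} \<subseteq> {..<2}"
      unfolding \<kappa>_def by auto
    fix f assume f: "automorphism V E f"
      and preserves: "\<forall>s\<in>r ` {0..4}. f s \<in> r ` {0..4} \<and> \<kappa> (f s) = \<kappa> s"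
    then have "f ` r ` {0..4} \<subseteq> r ` {0..4}"
      by blast
    moreover have "f (r 1) = r 1"
      using preserves[rule_format, of "r 1"] unfolding \<kappa>_def by (auto split: if_splits)
    ultimately show "\<forall>s\<in>r ` {0..4}. f s = s"
      using induced_k1p4_automorphism_fixing_end[OF f inj rV copy] by blast
  qed
  moreover have "card (r ` {0..4}) = 5"
    using card_image[OF inj] by simp
  moreover have "card (r ` {0..4}) \<le> card V"
    using card_mono[OF fin rV] .
  ultimately show ?thesis
    by linarith
qed

end
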